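(* For any evaporation rate $\gamma$, the DGLS variant $(A,\gamma,tab)$ described in the context is equivalent to MGM: in every round, given the same current assignment, each agent $i$ computes the same best value $d_i^*$ (under the same tie-breaking) and the same gain $\Delta_i$ as in MGM, and hence makes the same move.
   Context: A (binary) Distributed Constraint Optimization Problem (DCOP) consists of agents $1,\dots,n$, each controlling one variable $x_i$ with finite domain $D_i$, and binary constraint functions $f_{ij}:D_i\times D_j\to\mathbb{R}_{\ge0}$ with $f_{ji}=f_{ij}^T$; $\mathcal{N}_i$ is the set of neighbors of $i$. Write $\check f_{ij}=\min f_{ij}$, $\hat f_{ij}=\max f_{ij}$. MGM (Maximum Gain Message): in each synchronous round, each agent $i$, knowing neighbors' current values $d_j$, computes $d_i^*\in\arg\min_{d\in D_i}\sum_{j\in\mathcal{N}_i} f_{ij}(d,d_j)$ and gain $\Delta_i=\sum_{j\in\mathcal{N}_i}[f_{ij}(d_i,d_j)-f_{ij}(d_i^*,d_j)]$, exchanges gains with neighbors, and sets $d_i\gets d_i^*$ iff $\Delta_i>0$ and $\Delta_i$ is the best improvement among itself and its neighbors. DGLS with parameters $(A,\gamma,tab)$ (additive manner, evaporation rate $\gamma$, table scope): each agent $i$ keeps, for each $j\in\mathcal{N}_i$, a cost modifier $M_{ij}$ (a $|D_i|\times|D_j|$ real matrix), initialized to $0$, and uses effective cost $\mathrm{EffCost}(d_i,j,d_j)=f_{ij}(d_i,d_j)+M_{ij}(d_i,d_j)$. Initially each agent picks a random value and sends it to its neighbors. In each synchronous round agent $i$: (1) sets $\bar P_i=\emptyset$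 and receives neighbors' values $d_j$; (2) computes $d_i^*\in\arg\min_{d\in D_i}\sum_{j}\mathrm{EffCost}(d,j,d_j)$ and gain $\Delta_i=\sum_{j}[\mathrm{EffCost}(d_i,j,d_j)-\mathrm{EffCost}(d_i^*,j,d_j)]$, and exchanges gains; (3) if $\Delta_i>0$ and $\Delta_i$ is the best improvement among itself and its neighbors, sets $d_i\gets d_i^*$; otherwise, if no neighbor can improve, for each $j\in\mathcal{N}_i$ declares $f_{ij}$ violated with probability $\eta=\frac{f_{ij}(d_i,d_j)-\check f_{ij}}{\hat f_{ij}-\check f_{ij}}$, and for each violated one adds $j$ to $\bar P_i$ and sends SYNC to $j$; (4) lets $\tilde P_i$ be the set of neighbors from which it received SYNC; (5) for each $j$: $M_{ij}\gets\gamma M_{ij}$ entrywise, then if $j\in\bar P_i\cup\tilde P_i$ increases every entry of $M_{ij}$ by 1; (6) sends $d_i$ to neighbors. *)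

theory Defs
  imports Complex_Main
begin

text \<open>Agents are of type 'a (finite, linearly ordered: the order is used only to
break ties between equal gains); values are of type 'v. D i is the domain of
agent i, N i its set of neighbours, f i j x y the constraint cost of f_ij at
(x,y). A cost table C (either f itself, or f plus the cost modifiers M) has the
same shape as f. tb i S is the tie-breaking rule of agent i: it selects one
element from a nonempty set S of minimising values.\<close>

definition local_cost ::
  "('a \<Rightarrow> 'a set) \<Rightarrow> ('a \<Rightarrow> 'a \<Rightarrow> 'v \<Rightarrow> 'v \<Rightarrow> real) \<Rightarrow> ('a \<Rightarrow> 'v) \<Rightarrow> 'a \<Rightarrow> 'v \<Rightarrow> real" where
  "local_cost N C d i x = (\<Sum>j\<in>N i. C i j x (d j))"

definition best_val ::
  "('a \<Rightarrow> 'v set) \<Rightarrow> ('a \<Rightarrow> 'a set) \<Rightarrow> ('a \<Rightarrow> 'v set \<Rightarrow> 'v)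
   \<Rightarrow> ('a \<Rightarrow> 'a \<Rightarrow> 'v \<Rightarrow> 'v \<Rightarrow> real) \<Rightarrow> ('a \<Rightarrow> 'v) \<Rightarrow> 'a \<Rightarrow> 'v" where
  "best_val D N tb C d i =
     tb i {x \<in> D i. \<forall>y\<in>D i. local_cost N C d i x \<le> local_cost N C d i y}"

definition gain ::
  "('a \<Rightarrow> 'v set) \<Rightarrow> ('a \<Rightarrow> 'a set) \<Rightarrow> ('a \<Rightarrow> 'v set \<Rightarrow> 'v)
   \<Rightarrow> ('a \<Rightarrow> 'a \<Rightarrow> 'v \<Rightarrow> 'v \<Rightarrow> real) \<Rightarrow> ('a \<Rightarrow> 'v) \<Rightarrow> 'a \<Rightarrow> real" where
  "gain D N tb C d i = local_cost N C d i (d i) - local_cost N C d i (best_val D N tb C d i)"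

definition moves ::
  "('a::linorder \<Rightarrow> 'v set) \<Rightarrow> ('a \<Rightarrow> 'a set) \<Rightarrow> ('a \<Rightarrow> 'v set \<Rightarrow> 'v)
   \<Rightarrow> ('a \<Rightarrow> 'a \<Rightarrow> 'v \<Rightarrow> 'v \<Rightarrow> real) \<Rightarrow> ('a \<Rightarrow> 'v) \<Rightarrow> 'a \<Rightarrow> bool" where
  "moves D N tb C d i \<longleftrightarrow> gain D N tb C d i > 0 \<and>
     (\<forall>j\<in>N i. gain D N tb C d j < gain D N tb C d i \<or>
               (gain D N tb C d j = gain D N tb C d i \<and> i < j))"

definition next_val ::
  "('a::linorder \<Rightarrow> 'v set) \<Rightarrow> ('a \<Rightarrow> 'a set) \<Rightarrow> ('a \<Rightarrow> 'v set \<Rightarrow> 'v)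
   \<Rightarrow> ('a \<Rightarrow> 'a \<Rightarrow> 'v \<Rightarrow> 'v \<Rightarrow> real) \<Rightarrow> ('a \<Rightarrow> 'v) \<Rightarrow> 'a \<Rightarrow> 'v" where
  "next_val D N tb C d i = (if moves D N tb C d i then best_val D N tb C d i else d i)"

text \<open>MGM is best_val/gain/next_val with the cost table f itself.\<close>

definition eff_cost ::
  "('a \<Rightarrow> 'a \<Rightarrow> 'v \<Rightarrow> 'v \<Rightarrow> real) \<Rightarrow> ('a \<Rightarrow> 'a \<Rightarrow> 'v \<Rightarrow> 'v \<Rightarrow> real) \<Rightarrow> 'a \<Rightarrow> 'a \<Rightarrow> 'v \<Rightarrow> 'v \<Rightarrow> real" where
  "eff_cost f M i j x y = f i j x y + M i j x y"

definition fmin where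
  "fmin D f i j = Min ((\<lambda>(x, y). f i j x y) ` (D i \<times> D j))"
definition fmax where
  "fmax D f i j = Max ((\<lambda>(x, y). f i j x y) ` (D i \<times> D j))"
definition eta ::
  "('a \<Rightarrow> 'v set) \<Rightarrow> ('a \<Rightarrow> 'a \<Rightarrow> 'v \<Rightarrow> 'v \<Rightarrow> real) \<Rightarrow> ('a \<Rightarrow> 'v) \<Rightarrow> 'a \<Rightarrow> 'a \<Rightarrow> real" where
  "eta D f d i j = (f i j (d i) (d j) - fmin D f i j) / (fmax D f i j - fmin D f i j)"

definition may_declare where
  "may_declare D N tb f M d i \<longleftrightarrow> \<not> moves D N tb (eff_cost f M) d i \<and>
      (\<forall>j\<in>N i. \<not> gain D N tb (eff_cost f M) d j > 0)"

text \<open>V i is the set \<bar>P_i of constraints declared violated by agent i. An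
outcome V is possible (has positive probability) iff each V i is a subset of
N i, is empty unless i may declare, contains only j with eta > 0, and (when i
may declare) contains every j with eta = 1.\<close>
definition possible_viol where
  "possible_viol D N tb f M d V \<longleftrightarrow> (\<forall>i.
     V i \<subseteq> N i \<and>
     (\<not> may_declare D N tb f M d i \<longrightarrow> V i = {}) \<and>
     (\<forall>j\<in>V i. eta D f d i j > 0) \<and>
     (may_declare D N tb f M d i \<longrightarrow> {j\<in>N i. eta D f d i j \<ge> 1} \<subseteq> V i))"

text \<open>One DGLS(A, gamma, tab) round: values are updated as in step (3); each
M_ij (j a neighbour) is multiplied entrywise by gamma and then every entry is
increased by 1 if j is in \<bar>P_i (declared by i) or in \<tilde>P_i (i.e. j sent SYNC to i).\<close>
definition dgls_step ::
  "('a::linorder \<Rightarrow> 'v set) \<Rightarrow> ('a \<Rightarrow> 'a set) \<Rightarrow> ('a \<Rightarrow> 'v set \<Rightarrow> 'v)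
   \<Rightarrow> ('a \<Rightarrow> 'a \<Rightarrow> 'v \<Rightarrow> 'v \<Rightarrow> real) \<Rightarrow> real \<Rightarrow> ('a \<Rightarrow> 'a set)
   \<Rightarrow> ('a \<Rightarrow> 'v) \<times> ('a \<Rightarrow> 'a \<Rightarrow> 'v \<Rightarrow> 'v \<Rightarrow> real)
   \<Rightarrow> ('a \<Rightarrow> 'v) \<times> ('a \<Rightarrow> 'a \<Rightarrow> 'v \<Rightarrow> 'v \<Rightarrow> real)" where
  "dgls_step D N tb f \<gamma> V s =
     (let d = fst s; M = snd s in
      (\<lambda>i. next_val D N tb (eff_cost f M) d i,
       \<lambda>i j. if j \<in> N i
             then (\<lambda>x y. \<gamma> * M i j x y + (if j \<in> V i \<or> i \<in> V j then 1 else 0))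
             else M i j))"

text \<open>States (current assignment, cost modifiers) reachable by DGLS(A, gamma, tab)
with positive probability.\<close>
inductive dgls_reach ::
  "('a::linorder \<Rightarrow> 'v set) \<Rightarrow> ('a \<Rightarrow> 'a set) \<Rightarrow> ('a \<Rightarrow> 'v set \<Rightarrow> 'v)
   \<Rightarrow> ('a \<Rightarrow> 'a \<Rightarrow> 'v \<Rightarrow> 'v \<Rightarrow> real) \<Rightarrow> real
   \<Rightarrow> ('a \<Rightarrow> 'v) \<times> ('a \<Rightarrow> 'a \<Rightarrow> 'v \<Rightarrow> 'v \<Rightarrow> real) \<Rightarrow> bool"
  for D N tb f \<gamma> where
  init: "(\<forall>i. d i \<in> D i) \<Longrightarrow> dgls_reach D N tb f \<gamma> (d, \<lambda>i j x y. 0)"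
| step: "dgls_reach D N tb f \<gamma> (d, M) \<Longrightarrow> possible_viol D N tb f M d V \<Longrightarrow>
         dgls_reach D N tb f \<gamma> (dgls_step D N tb f \<gamma> V (d, M))"

end

theory Submission
  imports Defs
begin

text \<open>In the table scope every entry of M_ij is evaporated by the same factor and
increased by the same amount, so along any run each M_ij is a constant matrix m_ij.
The effective local cost of agent i then differs from its MGM local cost by the
offset \<Sum>j\<in>N i. m_ij, which does not depend on i's own value: the set of minimisers
(hence the tie-broken best value) and all gains coincide with those of MGM, and so
do the move decisions.\<close>

lemma dgls_reach_modifiers_constant:
  assumes "dgls_reach D N tb f \<gamma> s"
  shows "\<exists>m. snd s = (\<lambda>i j x y. m i j)"
  using assms
proof (induction rule: dgls_reach.induct)
  case init
  then show ?case by auto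
next
  case (step d M V)
  then obtain m where M: "M = (\<lambda>i j x y. m i j)" by auto
  let ?m' = "\<lambda>i j. if j \<in> N i then \<gamma> * m i j + (if j \<in> V i \<or> i \<in> V j then 1 else 0)
                   else m i j"
  have "snd (dgls_step D N tb f \<gamma> V (d, M)) = (\<lambda>i j x y. ?m' i j)"
    by (simp add: M dgls_step_def fun_eq_iff)
  then show ?case by (rule exI[of _ ?m'])
qed

lemma local_cost_eff_cost_constant:
  "local_cost N (eff_cost f (\<lambda>i j x y. m i j)) d i x = local_cost N f d i x + (\<Sum>j\<in>N i. m i j)"
  by (simp add: local_cost_def eff_cost_def sum.distrib)

context
  fixes N :: "'a::linorder \<Rightarrow> 'a set" and d :: "'a \<Rightarrow> 'v"
    and C C' :: "'a \<Rightarrow> 'a \<Rightarrow> 'v \<Rightarrow> 'v \<Rightarrow> real" and k :: "'a \<Rightarrow> real"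
  assumes shift: "\<And>i x. local_cost N C' d i x = local_cost N C d i x + k i"
begin

lemma best_val_offset: "best_val D N tb C' d i = best_val D N tb C d i"
  by (simp add: best_val_def shift)

lemma gain_offset: "gain D N tb C' d i = gain D N tb C d i"
  by (simp add: gain_def best_val_offset shift)

lemma moves_offset: "moves D N tb C' d i = moves D N tb C d i"
  by (simp add: moves_def gain_offset)

lemma next_val_offset: "next_val D N tb C' d i = next_val D N tb C d i"
  by (simp add: next_val_def moves_offset best_val_offset)

end

theorem theorem4:
  fixes D :: "'a::{finite,linorder} \<Rightarrow> 'v set"
    and N :: "'a \<Rightarrow> 'a set"
    and f :: "'a \<Rightarrow> 'a \<Rightarrow> 'v \<Rightarrow> 'v \<Rightarrow> real"
    and tb :: "'a \<Rightarrow> 'v set \<Rightarrow> 'v"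
    and \<gamma> :: real
  assumes dom_fin: "\<forall>i. finite (D i) \<and> D i \<noteq> {}"
    and nbr_irrefl: "\<forall>i. i \<notin> N i"
    and nbr_sym: "\<forall>i j. j \<in> N i \<longleftrightarrow> i \<in> N j"
    and f_nonneg: "\<forall>i j x y. f i j x y \<ge> 0"
    and f_sym: "\<forall>i j x y. f j i y x = f i j x y"
    and tb_sel: "\<forall>i S. S \<noteq> {} \<longrightarrow> tb i S \<in> S"
    and reach: "dgls_reach D N tb f \<gamma> (d, M)"
  shows "\<forall>i. best_val D N tb (eff_cost f M) d i = best_val D N tb f d i
           \<and> gain D N tb (eff_cost f M) d i = gain D N tb f d i
           \<and> next_val D N tb (eff_cost f M) d i = next_val D N tb f d i"
proof -
  obtain m where M: "M = (\<lambda>i j x y. m i j)"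
    using dgls_reach_modifiers_constant[OF reach] by auto
  have shift: "local_cost N (eff_cost f M) d i x = local_cost N f d i x + (\<Sum>j\<in>N i. m i j)"
    for i x
    unfolding M by (rule local_cost_eff_cost_constant)
  show ?thesis
    using best_val_offset[OF shift] gain_offset[OF shift] next_val_offset[OF shift] by blast
qed

end
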